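(* Let $n$, $U=U_{n+1}$, the bases $E_{\mathcal M}$, $F^{\mathcal M}$, the elements $E_{\mathcal M_1\cdots\mathcal M_k}$, $F^{\mathcal N_1\cdots\mathcal N_k}$ and the projectors $\mathbb{P}_k$ be as in the context, and let $p\ge2$ be an integer. Suppose there are real numbers $a_k$ ($k=2,3,\dots,p$) such that $$\langle E_{\mathcal M_1\cdots\mathcal M_k}|F^{\mathcal N_1\cdots\mathcal N_k}\rangle=a_k(\mathbb{P}_k)_{\mathcal M_1\cdots\mathcal M_k}{}^{\mathcal N_1\cdots\mathcal N_k}$$ for all indices and all $k=2,\dots,p$, and put $a_1=1$. Then, for all indices (with summation over repeated indices), (i) $[\![E_{\mathcal M},F^{\mathcal N_1\cdots\mathcal N_p}]\!]=(-1)^p\frac{a_p}{a_{p-1}}(\mathbb{P}_p)_{\mathcal M\mathcal M_2\cdots\mathcal M_p}{}^{\mathcal N_1\cdots\mathcal N_p}F^{\mathcal M_2\cdots\mathcal M_p}$; (ii) $[\![E_{\mathcal M_2\cdots\mathcal M_p},F^{\mathcal N_1\cdots\mathcal N_p}]\!]=a_p(\mathbb{P}_p)_{\mathcal M_1\mathcal M_2\cdots\mathcal M_p}{}^{\mathcal N_1\cdots\mathcal N_p}F^{\mathcal M_1}$; (iii) $[\![E_{\mathcal M_1\cdots\mathcal M_p},F^{\mathcal N_1\cdots\mathcal N_p}]\!]=a_p(\mathbb{P}_p)_{\mathcal M_1\cdots\mathcal M_p}{}^{\mathcal K_1\cdots\mathcal K_p}\sum_{i=1}^p\delta_{\mathcal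 K_1}{}^{\mathcal N_1}\cdots\delta_{\mathcal K_{i-1}}{}^{\mathcal N_{i-1}}\{E_{\mathcal K_i},F^{\mathcal N_i}\}\delta_{\mathcal K_{i+1}}{}^{\mathcal N_{i+1}}\cdots\delta_{\mathcal K_p}{}^{\mathcal N_p}$. (For $p=2$, $F^{\mathcal M_2\cdots\mathcal M_p}$ means $F^{\mathcal M_2}$ and $E_{\mathcal M_2\cdots\mathcal M_p}$ means $E_{\mathcal M_2}$.)
   Context: Fix an integer $n$ with $4\le n\le 8$. $E_n$ denotes the split real Lie algebra with Dynkin diagram on nodes $1,\dots,n$, where nodes $1,\dots,n-1$ form a chain and node $n$ is joined to node $n-3$. Extend this diagram by a node $0$ joined to node $1$, and let $A=(A_{IJ})_{I,J=0,\dots,n}$ with $A_{00}=0$, $A_{ii}=2$ for $i\ge1$, $A_{IJ}=-1$ if $I\neq J$ are joined and $0$ otherwise. Let $\tilde U$ be the real Lie superalgebra generated by $e_I,f_I,h_I$ ($I=0,\dots,n$), all even except $e_0,f_0$ which are odd, subject to $[\![h_I,e_J]\!]=A_{IJ}e_J$, $[\![h_I,f_J]\!]=-A_{IJ}f_J$, $[\![e_I,f_J]\!]=\delta_{IJ}h_J$, $[\![h_I,h_J]\!]=0$, where $[\![x,y]\!]$ is the superbracket (written $\{x,y\}$ when both are odd, where it is symmetric, and $[x,y]$ otherwise). $U=U_{n+1}$ is the quotient of $\tilde U$ by its maximal ideal intersecting $\mathrm{span}\{h_I\}$ trivially (equivalently by the ideal generated by $(\mathrm{ad}\,e_i)^{1-A_{iJ}}(e_J)$,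 $(\mathrm{ad}\,f_i)^{1-A_{iJ}}(f_J)$, $i=1,\dots,n$, $J=0,\dots,n$). $U=\bigoplus_p U_p$ is $\mathbb{Z}$-graded with $e_0\in U_{-1}$, $f_0\in U_1$, all other generators in $U_0$; $U_p$ has parity $p\bmod 2$ and $[\![U_p,U_q]\!]\subseteq U_{p+q}$. The subalgebra generated by $e_i,f_i,h_i$ ($i\ge1$) is $E_n$, and each $U_p$ is an $E_n$-module. $U$ carries an invariant, supersymmetric bilinear form $\langle\cdot|\cdot\rangle$ with $\langle U_p|U_q\rangle=0$ unless $p+q=0$, $\langle h_I|h_J\rangle=A_{IJ}$, $\langle e_I|f_J\rangle=\delta_{IJ}$, $\langle e_I|e_J\rangle=\langle f_I|f_J\rangle=0$. Choose bases $\{E_{\mathcal M}\}$ of $U_{-1}$ and $\{F^{\mathcal M}\}$ of $U_1$ with $\langle E_{\mathcal M}|F^{\mathcal N}\rangle=\delta_{\mathcal M}{}^{\mathcal N}$. For $k\ge2$ set $E_{\mathcal M_1\cdots\mathcal M_k}=[\![E_{\mathcal M_1},[\![E_{\mathcal M_2},\ldots,[\![E_{\mathcal M_{k-1}},E_{\mathcal M_k}]\!]\cdots]\!]]\!]$ and $F^{\mathcal M_1\cdots\mathcal M_k}=[\![F^{\mathcal M_1},[\![F^{\mathcal M_2},\ldots,[\![F^{\mathcal M_{k-1}},F^{\mathcal M_k}]\!]\cdots]\!]]\!]$; these span $U_{-k}$ and $U_k$ respectively. For $k\ge2$, $\mathbb{P}_k$ is the projector onto the $E_n$-representation $U_{-k}$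 inside the $k$-fold tensor power of $U_{-1}$: an array $(\mathbb{P}_k)_{\mathcal M_1\cdots\mathcal M_k}{}^{\mathcal N_1\cdots\mathcal N_k}$, idempotent as a matrix, such that $E_{\mathcal M_1\cdots\mathcal M_k}=(\mathbb{P}_k)_{\mathcal M_1\cdots\mathcal M_k}{}^{\mathcal N_1\cdots\mathcal N_k}E_{\mathcal N_1\cdots\mathcal N_k}$ and $F^{\mathcal N_1\cdots\mathcal N_k}=(\mathbb{P}_k)_{\mathcal M_1\cdots\mathcal M_k}{}^{\mathcal N_1\cdots\mathcal N_k}F^{\mathcal M_1\cdots\mathcal M_k}$. Repeated indices are summed. *)

theory Defs
  imports "HOL-Analysis.Analysis"
begin

text \<open>Sign (-1)^(|x||y|) for homogeneous elements of parities a, b (True = odd).\<close>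
definition sgn2 :: "bool \<Rightarrow> bool \<Rightarrow> real" where
  "sgn2 a b = (if a \<and> b then -1 else 1)"

text \<open>A real Lie superalgebra on a real vector space: V False = even part, V True = odd part,
  br = superbracket.\<close>
definition lie_superalgebra :: "(bool \<Rightarrow> 'a::real_vector set) \<Rightarrow> ('a \<Rightarrow> 'a \<Rightarrow> 'a) \<Rightarrow> bool" where
  "lie_superalgebra V br \<longleftrightarrow>
     subspace (V False) \<and> subspace (V True) \<and> V False \<inter> V True = {0} \<and>
     (\<forall>x. \<exists>y z. y \<in> V False \<and> z \<in> V True \<and> x = y + z) \<and>
     (\<forall>x. linear (br x)) \<and> (\<forall>y. linear (\<lambda>x. br x y)) \<and>
     (\<forall>a b x y. x \<in> V a \<longrightarrow> y \<in> V b \<longrightarrow> br x y \<in> V (a \<noteq> b)) \<and>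
     (\<forall>a b x y. x \<in> V a \<longrightarrow> y \<in> V b \<longrightarrow> br x y = - (sgn2 a b *\<^sub>R br y x)) \<and>
     (\<forall>a b x y z. x \<in> V a \<longrightarrow> y \<in> V b \<longrightarrow>
        br x (br y z) = br (br x y) z + sgn2 a b *\<^sub>R br y (br x z))"

definition graded_ideal :: "(bool \<Rightarrow> 'a::real_vector set) \<Rightarrow> ('a \<Rightarrow> 'a \<Rightarrow> 'a) \<Rightarrow> 'a set \<Rightarrow> bool" where
  "graded_ideal V br I \<longleftrightarrow> subspace I \<and>
     (\<forall>x\<in>I. \<exists>y z. y \<in> I \<inter> V False \<and> z \<in> I \<inter> V True \<and> x = y + z) \<and>
     (\<forall>x. \<forall>i\<in>I. br x i \<in> I)"

text \<open>Dynkin diagram of E_n (nodes 1..n-1 a chain, node n joined to node n-3), extended by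
  node 0 joined to node 1.\<close>
definition joined :: "nat \<Rightarrow> nat \<Rightarrow> nat \<Rightarrow> bool" where
  "joined n I J \<longleftrightarrow>
     (I = 0 \<and> J = 1) \<or> (I = 1 \<and> J = 0) \<or>
     (1 \<le> I \<and> J = I + 1 \<and> J \<le> n - 1) \<or> (1 \<le> J \<and> I = J + 1 \<and> I \<le> n - 1) \<or>
     (I = n \<and> J = n - 3) \<or> (J = n \<and> I = n - 3)"

definition cartanA :: "nat \<Rightarrow> nat \<Rightarrow> nat \<Rightarrow> real" where
  "cartanA n I J = (if I = J then (if I = 0 then 0 else 2) else if joined n I J then -1 else 0)"

text \<open>Monomials (nested brackets of generators) together with their Z-degree:
  e_0 has degree -1, f_0 degree 1, all other generators degree 0.\<close>
inductive_set gmonos :: "nat \<Rightarrow> ('a \<Rightarrow> 'a \<Rightarrow> 'a) \<Rightarrow> (nat \<Rightarrow> 'a) \<Rightarrow> (nat \<Rightarrow> 'a) \<Rightarrow> (nat \<Rightarrow> 'a)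
    \<Rightarrow> (int \<times> 'a) set"
  for n br e f h where
  "(-1, e 0) \<in> gmonos n br e f h"
| "(1, f 0) \<in> gmonos n br e f h"
| "1 \<le> i \<Longrightarrow> i \<le> n \<Longrightarrow> (0, e i) \<in> gmonos n br e f h"
| "1 \<le> i \<Longrightarrow> i \<le> n \<Longrightarrow> (0, f i) \<in> gmonos n br e f h"
| "I \<le> n \<Longrightarrow> (0, h I) \<in> gmonos n br e f h"
| "(p, x) \<in> gmonos n br e f h \<Longrightarrow> (q, y) \<in> gmonos n br e f h \<Longrightarrow> (p + q, br x y) \<in> gmonos n br e f h"

definition grade :: "nat \<Rightarrow> ('a::real_vector \<Rightarrow> 'a \<Rightarrow> 'a) \<Rightarrow> (nat \<Rightarrow> 'a) \<Rightarrow> (nat \<Rightarrow> 'a) \<Rightarrow> (nat \<Rightarrow> 'a)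
    \<Rightarrow> int \<Rightarrow> 'a set" where
  "grade n br e f h p = span {x. (p, x) \<in> gmonos n br e f h}"

text \<open>These properties characterise the quotient of the free algebra
  U~ by its maximal ideal intersecting span{h_I} trivially, up to isomorphism.\<close>
definition is_U :: "nat \<Rightarrow> (bool \<Rightarrow> 'a::real_vector set) \<Rightarrow> ('a \<Rightarrow> 'a \<Rightarrow> 'a)
    \<Rightarrow> (nat \<Rightarrow> 'a) \<Rightarrow> (nat \<Rightarrow> 'a) \<Rightarrow> (nat \<Rightarrow> 'a) \<Rightarrow> bool" where
  "is_U n V br e f h \<longleftrightarrow>
     lie_superalgebra V br \<and>
     e 0 \<in> V True \<and> f 0 \<in> V True \<and>
     (\<forall>i. 1 \<le> i \<and> i \<le> n \<longrightarrow> e i \<in> V False \<and> f i \<in> V False) \<and>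
     (\<forall>I\<le>n. h I \<in> V False) \<and>
     (\<forall>I\<le>n. \<forall>J\<le>n.
        br (h I) (e J) = cartanA n I J *\<^sub>R e J \<and>
        br (h I) (f J) = - (cartanA n I J *\<^sub>R f J) \<and>
        br (e I) (f J) = (if I = J then h J else 0) \<and>
        br (h I) (h J) = 0) \<and>
     span {x. \<exists>p. (p, x) \<in> gmonos n br e f h} = UNIV \<and>
     (\<forall>c. (\<Sum>I\<le>n. c I *\<^sub>R h I) = 0 \<longrightarrow> (\<forall>I\<le>n. c I = 0)) \<and>
     (\<forall>J. graded_ideal V br J \<and> J \<inter> span (h ` {..n}) = {0} \<longrightarrow> J = {0})"

definition inv_form :: "nat \<Rightarrow> (bool \<Rightarrow> 'a::real_vector set) \<Rightarrow> ('a \<Rightarrow> 'a \<Rightarrow> 'a)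
    \<Rightarrow> (nat \<Rightarrow> 'a) \<Rightarrow> (nat \<Rightarrow> 'a) \<Rightarrow> (nat \<Rightarrow> 'a) \<Rightarrow> ('a \<Rightarrow> 'a \<Rightarrow> real) \<Rightarrow> bool" where
  "inv_form n V br e f h B \<longleftrightarrow>
     (\<forall>x. linear (B x)) \<and> (\<forall>y. linear (\<lambda>x. B x y)) \<and>
     (\<forall>x y z. B (br x y) z = B x (br y z)) \<and>
     (\<forall>a b x y. x \<in> V a \<longrightarrow> y \<in> V b \<longrightarrow> B x y = sgn2 a b * B y x) \<and>
     (\<forall>p q x y. p + q \<noteq> 0 \<longrightarrow> x \<in> grade n br e f h p \<longrightarrow> y \<in> grade n br e f h q \<longrightarrow> B x y = 0) \<and>
     (\<forall>I\<le>n. \<forall>J\<le>n.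
        B (h I) (h J) = cartanA n I J \<and>
        B (e I) (f J) = (if I = J then 1 else 0) \<and>
        B (e I) (e J) = 0 \<and> B (f I) (f J) = 0)"

definition dual_bases :: "nat \<Rightarrow> ('a::real_vector \<Rightarrow> 'a \<Rightarrow> 'a)
    \<Rightarrow> (nat \<Rightarrow> 'a) \<Rightarrow> (nat \<Rightarrow> 'a) \<Rightarrow> (nat \<Rightarrow> 'a) \<Rightarrow> ('a \<Rightarrow> 'a \<Rightarrow> real)
    \<Rightarrow> ('m::finite \<Rightarrow> 'a) \<Rightarrow> ('m \<Rightarrow> 'a) \<Rightarrow> bool" where
  "dual_bases n br e f h B E F \<longleftrightarrow>
     span (range E) = grade n br e f h (-1) \<and>
     (\<forall>c. (\<Sum>M\<in>UNIV. c M *\<^sub>R E M) = 0 \<longrightarrow> (\<forall>M. c M = 0)) \<and>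
     span (range F) = grade n br e f h 1 \<and>
     (\<forall>c. (\<Sum>M\<in>UNIV. c M *\<^sub>R F M) = 0 \<longrightarrow> (\<forall>M. c M = 0)) \<and>
     (\<forall>M N. B (E M) (F N) = (if M = N then 1 else 0))"

fun nest :: "('a::zero \<Rightarrow> 'a \<Rightarrow> 'a) \<Rightarrow> ('m \<Rightarrow> 'a) \<Rightarrow> 'm list \<Rightarrow> 'a" where
  "nest br E [] = 0"
| "nest br E [M] = E M"
| "nest br E (M # Ms) = br (E M) (nest br E Ms)"

definition tuples :: "nat \<Rightarrow> 'm list set" where
  "tuples k = {xs. length xs = k}"

text \<open>P is the projector P_k onto U_{-k} inside the k-fold tensor power of U_{-1}:
  an idempotent matrix (indexed by k-tuples) with
  E_{M1..Mk} = P_{M..}^{N..} E_{N..} and F^{N..} = P_{M..}^{N..} F^{M..}, whose kernel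
  (acting on coefficient vectors c, c |-> c P) is exactly the kernel of the map
  c |-> c_{M..} E_{M..} onto U_{-k} (i.e. the image of P is identified with U_{-k}).\<close>
definition is_projector :: "('a::real_vector \<Rightarrow> 'a \<Rightarrow> 'a) \<Rightarrow> ('m::finite \<Rightarrow> 'a) \<Rightarrow> ('m \<Rightarrow> 'a)
    \<Rightarrow> ('m list \<Rightarrow> 'm list \<Rightarrow> real) \<Rightarrow> nat \<Rightarrow> bool" where
  "is_projector br E F P k \<longleftrightarrow>
     (\<forall>Ms\<in>tuples k. \<forall>Ns\<in>tuples k. (\<Sum>Ks\<in>tuples k. P Ms Ks * P Ks Ns) = P Ms Ns) \<and>
     (\<forall>Ms\<in>tuples k. nest br E Ms = (\<Sum>Ns\<in>tuples k. P Ms Ns *\<^sub>R nest br E Ns)) \<and>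
     (\<forall>Ns\<in>tuples k. nest br F Ns = (\<Sum>Ms\<in>tuples k. P Ms Ns *\<^sub>R nest br F Ms)) \<and>
     (\<forall>c. (\<Sum>Ms\<in>tuples k. c Ms *\<^sub>R nest br E Ms) = 0 \<longrightarrow>
          (\<forall>Ns\<in>tuples k. (\<Sum>Ms\<in>tuples k. c Ms * P Ms Ns) = 0))"

end

theory Submission
  imports Defs
begin

text \<open>
  The invariant form is nondegenerate: its radical is a graded ideal meeting the Cartan
  subalgebra trivially, because the extended Cartan matrix is nonsingular for 4 <= n <= 8.
  As U is spanned by nested brackets of the E_M, by U_0 and by nested brackets of the F^M,
  an element of U_k (k > 0) is determined by its pairings with the E_{M_1...M_k}, and an
  element of U_0 by its pairings with U_0. Each identity is checked this way: invariance moves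
  the bracket into the other argument, where the hypothesis evaluates the pairing as a_k P_k.
  For (iii), U_0 acts on F^{N_1...N_p} as a derivation, which produces the sum over i.
\<close>

lemma linear_span_into:
  fixes g :: "'a::real_vector \<Rightarrow> 'b::real_vector"
  assumes "linear g" and "subspace W" and "g ` S \<subseteq> W" and "x \<in> span S"
  shows "g x \<in> W"
  using assms span_linear_image[OF assms(1), of S] span_minimal[OF assms(3,2)] by blast

lemma bilinear_span_into:
  fixes g :: "'a::real_vector \<Rightarrow> 'b::real_vector \<Rightarrow> 'c::real_vector"
  assumes "\<And>x. linear (g x)" and "\<And>y. linear (\<lambda>x. g x y)" and "subspace W"
    and "\<And>s t. s \<in> S \<Longrightarrow> t \<in> T \<Longrightarrow> g s t \<in> W"
    and "x \<in> span S" and "y \<in> span T"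
  shows "g x y \<in> W"
proof -
  have "g s y \<in> W" if "s \<in> S" for s
    by (rule linear_span_into[OF assms(1,3) _ assms(6)]) (use assms(4) that in blast)
  then show ?thesis
    by (intro linear_span_into[where g = "\<lambda>x. g x y", OF assms(2,3) _ assms(5)]) blast
qed

lemma span_imageE:
  fixes X :: "'i \<Rightarrow> 'a::real_vector"
  assumes "x \<in> span (X ` S)" and "finite S"
  obtains c where "x = (\<Sum>i\<in>S. c i *\<^sub>R X i)"
proof -
  let ?W = "{x. \<exists>c. x = (\<Sum>i\<in>S. c i *\<^sub>R X i)}"
  have "subspace ?W"
    unfolding subspace_def
  proof (intro conjI ballI allI)
    show "0 \<in> ?W" by (auto intro: exI[of _ "\<lambda>_. 0"])
    fix x y assume "x \<in> ?W" "y \<in> ?W"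
    then obtain c d where "x = (\<Sum>i\<in>S. c i *\<^sub>R X i)" "y = (\<Sum>i\<in>S. d i *\<^sub>R X i)" by auto
    then show "x + y \<in> ?W"
      by (intro CollectI exI[of _ "\<lambda>i. c i + d i"]) (simp add: scaleR_add_left sum.distrib)
  next
    fix r x assume "x \<in> ?W"
    then obtain c where "x = (\<Sum>i\<in>S. c i *\<^sub>R X i)" by auto
    then show "r *\<^sub>R x \<in> ?W"
      by (intro CollectI exI[of _ "\<lambda>i. r * c i"]) (simp add: scaleR_sum_right)
  qed
  moreover have "X j \<in> ?W" if "j \<in> S" for j
    by (rule CollectI, rule exI[of _ "\<lambda>i. if i = j then 1 else 0"])
       (simp add: if_distrib[of "\<lambda>t. t *\<^sub>R _"] that assms(2) cong: if_cong)
  ultimately have "span (X ` S) \<subseteq> ?W" by (intro span_minimal) auto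
  with assms(1) that show ?thesis by blast
qed

lemma mem_tuples_iff [simp]: "Ls \<in> tuples k \<longleftrightarrow> length Ls = k"
  by (simp add: tuples_def)

lemma finite_tuples: "finite (tuples k :: 'm::finite list set)"
  unfolding tuples_def using finite_lists_length_eq[of "UNIV :: 'm set" k] by simp

lemma nest_Cons: "Ls \<noteq> [] \<Longrightarrow> nest br X (M # Ls) = br (X M) (nest br X Ls)"
  by (cases Ls) auto

lemma nest_image_tuples_1: "nest br X ` tuples 1 = range X"
proof -
  have tuples_1: "tuples 1 = range (\<lambda>M. [M])" by (auto simp: length_Suc_conv)
  show ?thesis unfolding tuples_1 by (simp add: image_image)
qed

lemma sum_tuples_agreeing_off:
  fixes g :: "'m::finite list \<Rightarrow> 'b::comm_monoid_add"
  assumes Ns: "Ns \<in> tuples p" and i: "i < p"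
  shows "(\<Sum>Ks\<in>tuples p. if (\<forall>j<p. j \<noteq> i \<longrightarrow> Ks ! j = Ns ! j) then g Ks else 0)
    = (\<Sum>K\<in>UNIV. g (Ns[i := K]))"
proof -
  have len: "length Ns = p" using Ns by simp
  have "{Ks \<in> tuples p. \<forall>j<p. j \<noteq> i \<longrightarrow> Ks ! j = Ns ! j} = range (\<lambda>K. Ns[i := K])"
  proof (intro equalityI subsetI)
    fix Ks assume "Ks \<in> {Ks \<in> tuples p. \<forall>j<p. j \<noteq> i \<longrightarrow> Ks ! j = Ns ! j}"
    then have "Ks = Ns[i := Ks ! i]"
      using len i by (intro nth_equalityI) (auto simp: nth_list_update)
    then show "Ks \<in> range (\<lambda>K. Ns[i := K])" by blast
  qed (use len in auto)
  moreover have "inj (\<lambda>K. Ns[i := K])"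
    by (rule injI) (metis i len nth_list_update_eq)
  ultimately show ?thesis
    by (simp add: sum.inter_filter[symmetric, OF finite_tuples] sum.reindex)
qed

lemma sum_tuples_delta:
  fixes g :: "'m::finite list \<Rightarrow> 'b::real_vector"
  shows "Ls \<in> tuples k \<Longrightarrow> (\<Sum>Ks\<in>tuples k. (if Ls = Ks then 1 else 0) *\<^sub>R g Ks) = g Ls"
  by (simp add: finite_tuples if_distrib[of "\<lambda>c. c *\<^sub>R _"] cong: if_cong)

lemma sgn2_odd_True: "sgn2 (odd q) True = (-1::real) ^ q"
  by (simp add: sgn2_def)

lemma cartanA_nonsingular:
  fixes c :: "nat \<Rightarrow> real"
  assumes "4 \<le> n" and "n \<le> 8" and "\<forall>J\<le>n. (\<Sum>I\<le>n. c I * cartanA n J I) = 0"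
  shows "\<forall>I\<le>n. c I = 0"
proof -
  have row: "(\<Sum>I\<le>n. c I * cartanA n J I) = 0" if "J \<le> n" for J using assms(3) that by blast
  have "n = 4 \<or> n = 5 \<or> n = 6 \<or> n = 7 \<or> n = 8" using assms(1,2) by auto
  then have "\<forall>I\<in>{..n}. c I = 0"
    using row[of 0] row[of 1] row[of 2] row[of 3] row[of 4] row[of 5] row[of 6] row[of 7] row[of 8]
    by (-, elim disjE; simp add: atMost_nat_numeral atMost_Suc cartanA_def joined_def;
        intro conjI; linarith)
  then show ?thesis by auto
qed

section \<open>Nondegeneracy of the invariant form\<close>

locale U_with_form =
  fixes n :: nat and V :: "bool \<Rightarrow> 'a::real_vector set" and br :: "'a \<Rightarrow> 'a \<Rightarrow> 'a"
    and e f h :: "nat \<Rightarrow> 'a" and B :: "'a \<Rightarrow> 'a \<Rightarrow> real"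
    and E F :: "'m::finite \<Rightarrow> 'a"
  assumes rank_ge: "4 \<le> n" and rank_le: "n \<le> 8"
    and is_U: "is_U n V br e f h"
    and inv_form: "inv_form n V br e f h B"
    and dual_bases: "dual_bases n br e f h B E F"
begin

abbreviation G :: "int \<Rightarrow> 'a set" where "G \<equiv> grade n br e f h"

abbreviation monomials :: "'a set" where "monomials \<equiv> {x. \<exists>d. (d, x) \<in> gmonos n br e f h}"

lemma superalgebra: "lie_superalgebra V br"
  using is_U unfolding is_U_def by (elim conjE) assumption

lemma e0_odd: "e 0 \<in> V True"
  using is_U unfolding is_U_def by (elim conjE) assumption

lemma f0_odd: "f 0 \<in> V True"
  using is_U unfolding is_U_def by (elim conjE) assumption

lemma ef_even [rule_format]: "\<forall>i. 1 \<le> i \<and> i \<le> n \<longrightarrow> e i \<in> V False \<and> f i \<in> V False"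
  using is_U unfolding is_U_def by (elim conjE) assumption

lemma h_even [rule_format]: "\<forall>I\<le>n. h I \<in> V False"
  using is_U unfolding is_U_def by (elim conjE) assumption

lemma span_monomials: "span monomials = UNIV"
  using is_U unfolding is_U_def by (elim conjE) assumption

lemma no_ideal_avoiding_cartan [rule_format]:
  "\<forall>J. graded_ideal V br J \<and> J \<inter> span (h ` {..n}) = {0} \<longrightarrow> J = {0}"
  using is_U unfolding is_U_def by (elim conjE) assumption

lemma subspace_V [rule_format]: "\<forall>b. subspace (V b)"
  using superalgebra unfolding lie_superalgebra_def all_bool_eq
  by (elim conjE) (intro conjI; assumption)

lemma V_False_inter_V_True: "V False \<inter> V True = {0}"
  using superalgebra unfolding lie_superalgebra_def by (elim conjE) assumption

lemma V_decompose [rule_format]: "\<forall>x. \<exists>y z. y \<in> V False \<and> z \<in> V True \<and> x = y + z"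
  using superalgebra unfolding lie_superalgebra_def by (elim conjE) assumption

lemma linear_br [rule_format]: "\<forall>x. linear (br x)"
  using superalgebra unfolding lie_superalgebra_def by (elim conjE) assumption

lemma linear_br_left [rule_format]: "\<forall>y. linear (\<lambda>x. br x y)"
  using superalgebra unfolding lie_superalgebra_def by (elim conjE) assumption

lemma br_parity [rule_format]: "\<forall>a b x y. x \<in> V a \<longrightarrow> y \<in> V b \<longrightarrow> br x y \<in> V (a \<noteq> b)"
  using superalgebra unfolding lie_superalgebra_def by (elim conjE) assumption

lemma br_supercommute [rule_format]:
  "\<forall>a b x y. x \<in> V a \<longrightarrow> y \<in> V b \<longrightarrow> br x y = - (sgn2 a b *\<^sub>R br y x)"
  using superalgebra unfolding lie_superalgebra_def by (elim conjE) assumption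

lemma br_jacobi [rule_format]:
  "\<forall>a b x y z. x \<in> V a \<longrightarrow> y \<in> V b \<longrightarrow>
     br x (br y z) = br (br x y) z + sgn2 a b *\<^sub>R br y (br x z)"
  using superalgebra unfolding lie_superalgebra_def by (elim conjE) assumption

lemma linear_B [rule_format]: "\<forall>x. linear (B x)"
  using inv_form unfolding inv_form_def by (elim conjE) assumption

lemma linear_B_left [rule_format]: "\<forall>y. linear (\<lambda>x. B x y)"
  using inv_form unfolding inv_form_def by (elim conjE) assumption

lemma B_invariant [rule_format]: "\<forall>x y z. B (br x y) z = B x (br y z)"
  using inv_form unfolding inv_form_def by (elim conjE) assumption

lemma B_supersymmetric [rule_format]:
  "\<forall>a b x y. x \<in> V a \<longrightarrow> y \<in> V b \<longrightarrow> B x y = sgn2 a b * B y x"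
  using inv_form unfolding inv_form_def by (elim conjE) assumption

lemma B_grade [rule_format]:
  "\<forall>p q x y. p + q \<noteq> 0 \<longrightarrow> x \<in> G p \<longrightarrow> y \<in> G q \<longrightarrow> B x y = 0"
  using inv_form unfolding inv_form_def by (elim conjE) assumption

lemma B_generators [rule_format]:
  "\<forall>I\<le>n. \<forall>J\<le>n. B (h I) (h J) = cartanA n I J \<and> B (e I) (f J) = (if I = J then 1 else 0)
     \<and> B (e I) (e J) = 0 \<and> B (f I) (f J) = 0"
  using inv_form unfolding inv_form_def by (elim conjE) assumption

lemma span_E: "span (range E) = G (-1)"
  using dual_bases unfolding dual_bases_def by (elim conjE) assumption

lemma span_F: "span (range F) = G 1"
  using dual_bases unfolding dual_bases_def by (elim conjE) assumption

lemma B_E_F [rule_format]: "\<forall>M N. B (E M) (F N) = (if M = N then 1 else 0)"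
  using dual_bases unfolding dual_bases_def by (elim conjE) assumption

lemma monomial_parity: "(d, x) \<in> gmonos n br e f h \<Longrightarrow> x \<in> V (odd d)"
proof (induction rule: gmonos.induct)
  case (6 p x q y)
  then show ?case using br_parity[OF 6(3,4)] by simp
qed (simp_all add: e0_odd f0_odd ef_even h_even)

lemma grade_parity: "x \<in> G d \<Longrightarrow> x \<in> V (odd d)"
  using span_minimal[OF _ subspace_V, of "{x. (d, x) \<in> gmonos n br e f h}" "odd d"]
  unfolding grade_def by (auto intro: monomial_parity)

lemma monomial_grade: "(d, x) \<in> gmonos n br e f h \<Longrightarrow> x \<in> G d"
  unfolding grade_def by (rule span_base) simp

lemma subspace_grade: "subspace (G d)"
  unfolding grade_def by simp

lemma br_grade: "x \<in> G p \<Longrightarrow> y \<in> G q \<Longrightarrow> br x y \<in> G (p + q)"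
  unfolding grade_def
  by (rule bilinear_span_into[OF linear_br linear_br_left subspace_span])
     (auto intro!: span_base gmonos.intros(6))

lemma E_grade: "E M \<in> G (-1)"
  using span_E by (metis UNIV_I image_eqI span_base)

lemma F_grade: "F M \<in> G 1"
  using span_F by (metis UNIV_I image_eqI span_base)

lemma E_odd: "E M \<in> V True"
  using grade_parity[OF E_grade] by simp

lemma F_odd: "F M \<in> V True"
  using grade_parity[OF F_grade] by simp

lemma V_eq_span_monomials: "V b = span {x. \<exists>d. (d, x) \<in> gmonos n br e f h \<and> odd d = b}"
proof
  let ?S = "\<lambda>b. span {x. \<exists>d. (d, x) \<in> gmonos n br e f h \<and> odd d = b}"
  have sub: "?S c \<subseteq> V c" for c
    by (rule span_minimal[OF _ subspace_V]) (auto dest: monomial_parity)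
  then show "?S b \<subseteq> V b" .
  show "V b \<subseteq> ?S b"
  proof
    fix x assume x: "x \<in> V b"
    have "x \<in> span monomials" using span_monomials by simp
    also have "monomials = {x. \<exists>d. (d, x) \<in> gmonos n br e f h \<and> odd d = b}
        \<union> {x. \<exists>d. (d, x) \<in> gmonos n br e f h \<and> odd d = (\<not> b)}"
      by auto
    finally obtain y z where yz: "x = y + z" "y \<in> ?S b" "z \<in> ?S (\<not> b)"
      unfolding span_Un by blast
    have "z = x - y" using yz(1) by simp
    then have "z \<in> V b" using x sub yz(2) subspace_V by (auto intro: subspace_diff)
    moreover have "z \<in> V (\<not> b)" using sub yz(3) by blast
    ultimately have "z = 0" using V_False_inter_V_True by (cases b) auto
    then show "x \<in> ?S b" using yz by simp
  qed
qed

lemma B_opposite_parity: "x \<in> V a \<Longrightarrow> y \<in> V b \<Longrightarrow> a \<noteq> b \<Longrightarrow> B x y = 0"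
proof -
  assume "x \<in> V a" "y \<in> V b" "a \<noteq> b"
  have "B x y \<in> {0}"
  proof (rule bilinear_span_into[OF linear_B linear_B_left])
    show "subspace {0::real}" by (simp add: subspace_def)
    show "x \<in> span {x. \<exists>d. (d, x) \<in> gmonos n br e f h \<and> odd d = a}"
      using \<open>x \<in> V a\<close> V_eq_span_monomials by blast
    show "y \<in> span {x. \<exists>d. (d, x) \<in> gmonos n br e f h \<and> odd d = b}"
      using \<open>y \<in> V b\<close> V_eq_span_monomials by blast
    fix u v assume "u \<in> {x. \<exists>d. (d, x) \<in> gmonos n br e f h \<and> odd d = a}"
      "v \<in> {x. \<exists>d. (d, x) \<in> gmonos n br e f h \<and> odd d = b}"
    then obtain d q where "(d, u) \<in> gmonos n br e f h" "(q, v) \<in> gmonos n br e f h"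
      and "odd d \<noteq> odd q" using \<open>a \<noteq> b\<close> by auto
    moreover from \<open>odd d \<noteq> odd q\<close> have "d + q \<noteq> 0"
      by (metis add.inverse_unique even_minus)
    ultimately show "B u v \<in> {0}" using B_grade monomial_grade by blast
  qed
  then show "B x y = 0" by simp
qed

definition radical :: "'a set" where "radical = {x. \<forall>y. B y x = 0}"

lemma subspace_radical: "subspace radical"
  unfolding subspace_def radical_def
  by (simp add: linear_0[OF linear_B] linear_add[OF linear_B] linear_scale[OF linear_B])

lemma radical_graded_ideal: "graded_ideal V br radical"
  unfolding graded_ideal_def
proof (intro conjI ballI allI)
  show "subspace radical" by (rule subspace_radical)
next
  fix x assume x: "x \<in> radical"
  obtain y z where yz: "y \<in> V False" "z \<in> V True" "x = y + z" using V_decompose by blast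
  have "y \<in> radical" unfolding radical_def
  proof (intro CollectI allI)
    fix w
    obtain w0 w1 where w: "w0 \<in> V False" "w1 \<in> V True" "w = w0 + w1" using V_decompose by blast
    have "B w0 y = B w0 x - B w0 z"
      using yz(3) linear_add[OF linear_B] by simp
    also have "\<dots> = 0"
      using x B_opposite_parity[OF w(1) yz(2)] by (simp add: radical_def)
    finally show "B w y = 0"
      using w(3) linear_add[OF linear_B_left] B_opposite_parity[OF w(2) yz(1)] by simp
  qed
  moreover from this have "z \<in> radical"
    using x yz(3) subspace_radical subspace_diff by fastforce
  ultimately show "\<exists>y z. y \<in> radical \<inter> V False \<and> z \<in> radical \<inter> V True \<and> x = y + z"
    using yz by blast
next
  fix x i assume "i \<in> radical"
  then show "br x i \<in> radical" unfolding radical_def by (simp add: B_invariant[symmetric])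
qed

lemma radical_inter_cartan: "radical \<inter> span (h ` {..n}) = {0}"
proof (intro equalityI subsetI)
  fix x assume x: "x \<in> radical \<inter> span (h ` {..n})"
  then obtain c where c: "x = (\<Sum>I\<le>n. c I *\<^sub>R h I)"
    using span_imageE[of x h "{..n}"] by blast
  have "(\<Sum>I\<le>n. c I * cartanA n J I) = 0" if J: "J \<le> n" for J
  proof -
    have "(\<Sum>I\<le>n. c I * cartanA n J I) = (\<Sum>I\<le>n. c I * B (h J) (h I))"
      using J B_generators by (intro sum.cong) simp_all
    also have "\<dots> = B (h J) x"
      unfolding c by (simp add: linear_sum[OF linear_B] linear_scale[OF linear_B])
    finally show ?thesis using x by (simp add: radical_def)
  qed
  then have "\<forall>I\<le>n. c I = 0" using cartanA_nonsingular[OF rank_ge rank_le] by blast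
  then show "x \<in> {0}" using c by simp
qed (use subspace_radical in \<open>simp add: subspace_0 span_zero\<close>)

lemma B_nondegenerate:
  assumes "\<And>y. B y x = 0"
  shows "x = 0"
proof -
  have "radical = {0}"
    using no_ideal_avoiding_cartan radical_graded_ideal radical_inter_cartan by blast
  moreover have "x \<in> radical" using assms by (simp add: radical_def)
  ultimately show ?thesis by simp
qed

section \<open>Triangular decomposition\<close>

abbreviation nests :: "('m \<Rightarrow> 'a) \<Rightarrow> nat \<Rightarrow> 'a set" where
  "nests X k \<equiv> span (nest br X ` tuples k)"

lemma unit_grade: "span (range X) = G s \<Longrightarrow> X M \<in> G s"
  by (metis UNIV_I image_eqI span_base)

lemma nest_grade:
  assumes X: "span (range X) = G s" and "Ls \<noteq> []"
  shows "nest br X Ls \<in> G (s * int (length Ls))"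
  using assms(2)
proof (induction Ls)
  case (Cons M Ls)
  have XM: "X M \<in> G s" using unit_grade[OF X] .
  show ?case
  proof (cases "Ls = []")
    case False
    have "br (X M) (nest br X Ls) \<in> G (s + s * int (length Ls))"
      by (rule br_grade[OF XM Cons.IH[OF False]])
    then show ?thesis by (simp add: nest_Cons[OF False] algebra_simps)
  qed (use XM in simp)
qed simp

lemma unit_grade_odd:
  assumes "span (range X) = G s" and "s \<in> {1, -1}"
  shows "X M \<in> V True"
  using grade_parity[OF unit_grade[OF assms(1)]] assms(2) by auto

lemma br_span_nest:
  assumes x: "x \<in> span (range X)" and "Ls \<noteq> []"
  shows "br x (nest br X Ls) \<in> nests X (Suc (length Ls))"
proof (rule linear_span_into[OF linear_br_left subspace_span _ x])
  have "br (X M) (nest br X Ls) = nest br X (M # Ls)" for M by (simp add: nest_Cons[OF assms(2)])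
  then show "(\<lambda>x. br x (nest br X Ls)) ` range X \<subseteq> nests X (Suc (length Ls))"
    by (auto intro!: span_base image_eqI[where x = "_ # Ls"])
qed

lemma br_unit_nests:
  assumes y: "y \<in> nests X k" and "k \<noteq> 0"
  shows "br (X M) y \<in> nests X (Suc k)"
proof (rule linear_span_into[OF linear_br subspace_span _ y])
  have "br (X M) (nest br X Ls) = nest br X (M # Ls)" if "Ls \<in> tuples k" for Ls
    using that assms(2) by (simp add: nest_Cons[symmetric] length_0_conv[symmetric] del: length_0_conv)
  then show "br (X M) ` nest br X ` tuples k \<subseteq> nests X (Suc k)"
    by (auto intro!: span_base image_eqI[where x = "M # _"])
qed

lemma grade0_br_nest:
  assumes X: "span (range X) = G s" and s: "s \<in> {1, -1}" and u: "u \<in> G 0" and "Ls \<noteq> []"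
  shows "br u (nest br X Ls) \<in> nests X (length Ls)"
  using assms(4)
proof (induction Ls)
  case (Cons M Ls)
  have uX: "br u (X M) \<in> span (range X)"
    using br_grade[OF u, of "X M" s] X by (auto intro: span_base)
  show ?case
  proof (cases "Ls = []")
    case False
    have "br u (nest br X (M # Ls)) = br (br u (X M)) (nest br X Ls) + br (X M) (br u (nest br X Ls))"
      using br_jacobi[OF grade_parity[OF u] unit_grade_odd[OF X s], where z = "nest br X Ls"]
      by (simp add: sgn2_def nest_Cons[OF False])
    moreover have "br (br u (X M)) (nest br X Ls) \<in> nests X (length (M # Ls))"
      using br_span_nest[OF uX False] by simp
    moreover have "br (X M) (br u (nest br X Ls)) \<in> nests X (length (M # Ls))"
      using br_unit_nests[OF Cons.IH[OF False]] False by simp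
    ultimately show ?thesis by (simp add: span_add)
  qed (use uX nest_image_tuples_1[of br X] in simp)
qed simp

lemma br_unit_nest_opposite:
  assumes X: "span (range X) = G s" and s: "s \<in> {1, -1}"
    and Y: "span (range Y) = G (-s)" and "Ls \<noteq> []"
  shows "br (X M) (nest br Y Ls)
    \<in> (if length Ls = 1 then G 0 else nests Y (length Ls - 1))"
  using assms(4)
proof (induction Ls)
  case (Cons N Ls)
  have s': "-s \<in> {1, -1}" using s by auto
  have YN: "Y N \<in> G (-s)" using unit_grade[OF Y] .
  have XY: "br (X M) (Y N) \<in> G 0"
    using br_grade[OF _ YN, of "X M" s] X by (auto intro: span_base)
  show ?case
  proof (cases "Ls = []")
    case False
    have "br (X M) (nest br Y (N # Ls))
        = br (br (X M) (Y N)) (nest br Y Ls) - br (Y N) (br (X M) (nest br Y Ls))"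
      using br_jacobi[OF unit_grade_odd[OF X s] unit_grade_odd[OF Y s'], where z = "nest br Y Ls"]
      by (simp add: sgn2_def nest_Cons[OF False])
    moreover have "br (br (X M) (Y N)) (nest br Y Ls) \<in> nests Y (length Ls)"
      by (rule grade0_br_nest[OF Y s' XY False])
    moreover have "br (Y N) (br (X M) (nest br Y Ls)) \<in> nests Y (length Ls)"
    proof (cases "length Ls = 1")
      case True
      then have "br (Y N) (br (X M) (nest br Y Ls)) \<in> span (range Y)"
        using Cons.IH[OF False] br_grade[OF YN, of _ 0] Y by simp
      then show ?thesis using True nest_image_tuples_1[of br Y] by simp
    next
      case False': False
      then have "length Ls = Suc (length Ls - 1)" "length Ls - 1 \<noteq> 0"
        using False by (cases Ls; simp)+
      then show ?thesis
        using br_unit_nests[of _ Y "length Ls - 1" N] Cons.IH[OF False] False' by simp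
    qed
    ultimately show ?thesis using False by (simp add: span_diff)
  qed (use XY in simp)
qed simp

(* For X = E, Y = F this spans U = U_- + U_0 + U_+ (nested brackets of U_-1, U_0, nested brackets of U_1). *)
definition triangular :: "('m \<Rightarrow> 'a) \<Rightarrow> ('m \<Rightarrow> 'a) \<Rightarrow> 'a set" where
  "triangular X Y = {nest br X Ls |Ls. Ls \<noteq> []} \<union> G 0 \<union> {nest br Y Ls |Ls. Ls \<noteq> []}"

lemma triangular_swap: "triangular X Y = triangular Y X"
  unfolding triangular_def by blast

lemma nests_subset_triangular: "k \<noteq> 0 \<Longrightarrow> nests X k \<subseteq> span (triangular X Y)"
  by (rule span_mono) (auto simp: triangular_def)

lemma grade0_subset_triangular: "G 0 \<subseteq> span (triangular X Y)"
  using span_superset[of "triangular X Y"] by (auto simp: triangular_def)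

lemma span_units_subset_triangular: "span (range X) \<subseteq> span (triangular X Y)"
  using nests_subset_triangular[of 1 X Y] unfolding nest_image_tuples_1 by simp

lemma grade0_br_triangular:
  assumes X: "span (range X) = G s" and s: "s \<in> {1, -1}" and Y: "span (range Y) = G (-s)"
    and u: "u \<in> G 0" and t: "t \<in> span (triangular X Y)"
  shows "br u t \<in> span (triangular X Y)"
proof (rule linear_span_into[OF linear_br subspace_span _ t], safe)
  have s': "-s \<in> {1, -1}" and Y': "span (range Y) = G (- s)" using s Y by auto
  fix a assume "a \<in> triangular X Y"
  then consider Ls where "Ls \<noteq> []" "a = nest br X Ls" | "a \<in> G 0"
    | Ls where "Ls \<noteq> []" "a = nest br Y Ls"
    unfolding triangular_def by blast
  then show "br u a \<in> span (triangular X Y)"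
  proof cases
    case 1 then show ?thesis
      using grade0_br_nest[OF X s u] nests_subset_triangular[of "length Ls" X Y] by auto
  next
    case 2 then show ?thesis using br_grade[OF u] grade0_subset_triangular by fastforce
  next
    case 3 then show ?thesis
      using grade0_br_nest[OF Y' s' u] nests_subset_triangular[of "length Ls" Y X]
      by (auto simp: triangular_swap)
  qed
qed

lemma unit_br_triangular:
  assumes X: "span (range X) = G s" and s: "s \<in> {1, -1}" and Y: "span (range Y) = G (-s)"
    and x: "x \<in> span (range X)" and t: "t \<in> span (triangular X Y)"
  shows "br x t \<in> span (triangular X Y)"
proof (rule linear_span_into[OF linear_br subspace_span _ t], safe)
  fix a assume "a \<in> triangular X Y"
  then consider Ls where "Ls \<noteq> []" "a = nest br X Ls" | "a \<in> G 0"
    | Ls where "Ls \<noteq> []" "a = nest br Y Ls"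
    unfolding triangular_def by blast
  then show "br x a \<in> span (triangular X Y)"
  proof cases
    case 1 then show ?thesis
      using br_span_nest[OF x] nests_subset_triangular[of "Suc (length Ls)" X Y] by auto
  next
    case 2
    have "br x a \<in> G s" using br_grade[OF _ 2, of x s] x X by simp
    then show ?thesis using X span_units_subset_triangular by auto
  next
    case 3
    have "br (X M) (nest br Y Ls) \<in> span (triangular X Y)" for M
    proof (cases "length Ls = 1")
      case True then show ?thesis
        using br_unit_nest_opposite[OF X s Y 3(1)] grade0_subset_triangular by auto
    next
      case False
      then have "length Ls - 1 \<noteq> 0" using 3(1) by (cases Ls) auto
      then show ?thesis
        using br_unit_nest_opposite[OF X s Y 3(1)] False
          nests_subset_triangular[of "length Ls - 1" Y X] by (auto simp: triangular_swap)
    qed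
    then show ?thesis
      using linear_span_into[OF linear_br_left subspace_span _ x, of "nest br Y Ls"] 3(2) by auto
  qed
qed

lemma low_grades_br_span_triangular:
  assumes x: "x \<in> G 0 \<union> G (-1) \<union> G 1"
  shows "x \<in> span (triangular E F) \<and> (\<forall>t\<in>span (triangular E F). br x t \<in> span (triangular E F))"
proof -
  have E: "span (range E) = G (-1)" and F: "span (range F) = G (- (-1))"
    and F': "span (range F) = G 1" and E': "span (range E) = G (- 1)"
    using span_E span_F by simp_all
  consider "x \<in> G 0" | "x \<in> span (range E)" | "x \<in> span (range F)"
    using x unfolding span_E span_F by blast
  then show ?thesis
  proof cases
    case 1
    then show ?thesis
      using grade0_subset_triangular grade0_br_triangular[OF E _ F 1] by auto
  next
    case 2
    then show ?thesis
      using span_units_subset_triangular[of E F] unit_br_triangular[OF E _ F 2] by auto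
  next
    case 3
    then show ?thesis
      using span_units_subset_triangular[of F E] unit_br_triangular[OF F' _ E' 3]
      unfolding triangular_swap[of F E] by auto
  qed
qed

lemma span_triangular: "span (triangular E F) = UNIV"
proof -
  let ?T = "span (triangular E F)"
  note unit = low_grades_br_span_triangular
  have "m \<in> ?T \<and> (\<forall>t\<in>?T. br m t \<in> ?T)" if "(d, m) \<in> gmonos n br e f h" for d m
    using that
  proof (induction rule: gmonos.induct)
    case 1
    show ?case by (rule unit) (use monomial_grade[OF gmonos.intros(1)] in simp)
  next
    case 2
    show ?case by (rule unit) (use monomial_grade[OF gmonos.intros(2)] in simp)
  next
    case (3 i)
    show ?case by (rule unit) (use monomial_grade[OF gmonos.intros(3)[OF 3]] in simp)
  next
    case (4 i)
    show ?case by (rule unit) (use monomial_grade[OF gmonos.intros(4)[OF 4]] in simp)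
  next
    case (5 I)
    show ?case by (rule unit) (use monomial_grade[OF gmonos.intros(5)[OF 5]] in simp)
  next
    case (6 p x q y)
    have "br (br x y) t = br x (br y t) - sgn2 (odd p) (odd q) *\<^sub>R br y (br x t)" for t
      using br_jacobi[OF monomial_parity[OF 6(1)] monomial_parity[OF 6(2)], where z = t] by simp
    then show ?case using 6 by (auto intro!: span_diff span_scale)
  qed
  then have "monomials \<subseteq> ?T" by blast
  then show ?thesis using span_monomials span_minimal[of monomials ?T] by auto
qed

section \<open>Pairings with nested brackets\<close>

lemma nest_E_grade: "Ls \<noteq> [] \<Longrightarrow> nest br E Ls \<in> G (- int (length Ls))"
  using nest_grade[OF span_E] by simp

lemma nest_F_grade: "Ls \<noteq> [] \<Longrightarrow> nest br F Ls \<in> G (int (length Ls))"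
  using nest_grade[OF span_F] by simp

lemma B_grade_nondegenerate:
  assumes w: "w \<in> G d" and orth: "\<And>y. y \<in> G (- d) \<Longrightarrow> B y w = 0"
  shows "w = 0"
proof (rule B_nondegenerate)
  fix y
  have "y \<in> span monomials" using span_monomials by simp
  moreover have "(\<lambda>y. B y w) ` monomials \<subseteq> {0}"
  proof safe
    fix q m assume "(q, m) \<in> gmonos n br e f h"
    then show "B m w = 0"
      using orth[of m] B_grade[of q d m w] w monomial_grade by (cases "q = - d") auto
  qed
  ultimately have "B y w \<in> {0}"
    by (intro linear_span_into[OF linear_B_left]) (auto simp: subspace_def)
  then show "B y w = 0" by simp
qed

lemma B_nest_E_nondegenerate:
  assumes j: "j \<noteq> 0" and w: "w \<in> G (int j)"
    and orth: "\<And>Ls. Ls \<in> tuples j \<Longrightarrow> B (nest br E Ls) w = 0"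
  shows "w = 0"
proof (rule B_nondegenerate)
  fix y
  have "(\<lambda>y. B y w) ` triangular E F \<subseteq> {0}"
  proof safe
    fix a assume "a \<in> triangular E F"
    then consider Ls where "Ls \<noteq> []" "a = nest br E Ls" | "a \<in> G 0"
      | Ls where "Ls \<noteq> []" "a = nest br F Ls"
      unfolding triangular_def by blast
    then show "B a w = 0"
    proof cases
      case 1
      then show ?thesis
        using orth[of Ls] B_grade[OF _ nest_E_grade[OF 1(1)] w] by (cases "length Ls = j") auto
    next
      case 2
      then show ?thesis using B_grade[OF _ 2 w] j by simp
    next
      case 3
      then show ?thesis using B_grade[OF _ nest_F_grade[OF 3(1)] w] j by simp
    qed
  qed
  then have "B y w \<in> {0}"
    using span_triangular
    by (intro linear_span_into[OF linear_B_left, where S = "triangular E F"]) (auto simp: subspace_def)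
  then show "B y w = 0" by simp
qed

lemma F_expansion:
  assumes "x \<in> G 1"
  shows "x = (\<Sum>K\<in>UNIV. B (E K) x *\<^sub>R F K)"
proof -
  obtain c where c: "x = (\<Sum>K\<in>UNIV. c K *\<^sub>R F K)"
    using span_imageE[of x F UNIV] assms span_F by auto
  have "B (E L) x = c L" for L
    unfolding c
    by (simp add: linear_sum[OF linear_B] linear_scale[OF linear_B] B_E_F
        if_distrib[of "\<lambda>t. c _ * t"] cong: if_cong)
  then show ?thesis using c by simp
qed

lemma pairing_tuples_1:
  "Ls \<in> tuples 1 \<Longrightarrow> Ks \<in> tuples 1 \<Longrightarrow>
    B (nest br E Ls) (nest br F Ks) = (if Ls = Ks then 1 else 0)"
  by (auto simp: length_Suc_conv B_E_F split: if_splits)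

lemma B_even_br:
  assumes "u \<in> V False" and "x \<in> V a" and "y \<in> V b"
  shows "B u (br x y) = - B x (br u y)"
proof -
  have "B u (br x y) = B (br x y) u"
    using B_supersymmetric[OF assms(1) br_parity[OF assms(2,3)]] by (simp add: sgn2_def)
  also have "\<dots> = B x (br y u)" by (rule B_invariant)
  also have "br y u = - br u y"
    using br_supercommute[OF assms(3,1)] by (simp add: sgn2_def)
  finally show ?thesis by (simp add: linear_neg[OF linear_B])
qed

lemma B_nest_E_br_E:
  assumes "Ls \<noteq> []"
  shows "B (nest br E Ls) (br (E M) y) = (-1) ^ Suc (length Ls) * B (nest br E (M # Ls)) y"
proof -
  have "br (nest br E Ls) (E M) = - (sgn2 (odd (length Ls)) True *\<^sub>R nest br E (M # Ls))"
    using br_supercommute[OF grade_parity[OF nest_E_grade[OF assms]] E_odd]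
    by (simp add: nest_Cons[OF assms])
  then show ?thesis
    by (simp add: B_invariant[symmetric] linear_neg[OF linear_B_left] linear_scale[OF linear_B_left]
        sgn2_odd_True)
qed

(* Leibniz rule for the action of U_0, with each [u, F^N] expanded in the basis F^K. *)
lemma grade0_br_nest_F:
  assumes u: "u \<in> G 0" and "Ns \<noteq> []"
  shows "br u (nest br F Ns) =
    (\<Sum>j<length Ns. \<Sum>K\<in>UNIV. B (E K) (br u (F (Ns ! j))) *\<^sub>R nest br F (Ns[j := K]))"
  using assms(2)
proof (induction Ns)
  case (Cons N Ns)
  have expand: "br u (F N) = (\<Sum>K\<in>UNIV. B (E K) (br u (F N)) *\<^sub>R F K)"
    using F_expansion br_grade[OF u F_grade] by simp
  show ?case
  proof (cases "Ns = []")
    case False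
    have "br u (nest br F (N # Ns)) = br (br u (F N)) (nest br F Ns) + br (F N) (br u (nest br F Ns))"
      using br_jacobi[OF grade_parity[OF u] F_odd, where z = "nest br F Ns"]
      by (simp add: sgn2_def nest_Cons[OF False])
    also have "br (br u (F N)) (nest br F Ns)
        = (\<Sum>K\<in>UNIV. B (E K) (br u (F ((N # Ns) ! 0))) *\<^sub>R nest br F ((N # Ns)[0 := K]))"
      by (subst expand) (simp add: linear_sum[OF linear_br_left] linear_scale[OF linear_br_left]
          nest_Cons[OF False])
    also have "br (F N) (br u (nest br F Ns)) = (\<Sum>j<length Ns. \<Sum>K\<in>UNIV.
        B (E K) (br u (F ((N # Ns) ! Suc j))) *\<^sub>R nest br F ((N # Ns)[Suc j := K]))"
      using False by (simp add: Cons.IH[OF False] linear_sum[OF linear_br] linear_scale[OF linear_br]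
          nest_Cons)
    finally show ?thesis by (simp only: length_Cons sum.lessThan_Suc_shift)
  qed (use expand in simp)
qed simp

lemma eq_if_B_grade_eq:
  assumes "x \<in> G d" and "y \<in> G d" and "\<And>u. u \<in> G (- d) \<Longrightarrow> B u x = B u y"
  shows "x = y"
  using B_grade_nondegenerate[of "x - y" d] assms subspace_grade
  by (simp add: subspace_diff linear_diff[OF linear_B])

lemma eq_if_B_nest_E_eq:
  assumes "j \<noteq> 0" and "x \<in> G (int j)" and "y \<in> G (int j)"
    and "\<And>Ls. Ls \<in> tuples j \<Longrightarrow> B (nest br E Ls) x = B (nest br E Ls) y"
  shows "x = y"
  using B_nest_E_nondegenerate[of j "x - y"] assms subspace_grade
  by (simp add: subspace_diff linear_diff[OF linear_B])

lemma nest_F_eq_0_if_pairings_vanish: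
  assumes "Ks \<noteq> []" and "\<And>Ls. Ls \<in> tuples (length Ks) \<Longrightarrow> B (nest br E Ls) (nest br F Ks) = 0"
  shows "nest br F Ks = 0"
  using B_nest_E_nondegenerate[OF _ nest_F_grade[OF assms(1)]] assms by simp

lemma pairing_Cons_absorbs_projector:
  assumes p: "2 \<le> p"
    and pairing: "\<And>Ls Ns. Ls \<in> tuples p \<Longrightarrow> Ns \<in> tuples p \<Longrightarrow>
      B (nest br E Ls) (nest br F Ns) = a * P Ls Ns"
    and projector_lower: "\<And>Ls. Ls \<in> tuples (p - 1) \<Longrightarrow>
      nest br E Ls = (\<Sum>Ks\<in>tuples (p - 1). Q Ls Ks *\<^sub>R nest br E Ks)"
    and Ls: "Ls \<in> tuples (p - 1)" and Ns: "Ns \<in> tuples p"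
  shows "a * P (M # Ls) Ns = (\<Sum>Ks\<in>tuples (p - 1). Q Ls Ks * (a * P (M # Ks) Ns))"
proof -
  have Cons: "br (E M) (nest br E Ks) = nest br E (M # Ks)" if "Ks \<in> tuples (p - 1)" for Ks
    using that p nest_Cons[of Ks br E M] by (cases Ks) auto
  moreover have Cons_mem: "M # Ks \<in> tuples p" if "Ks \<in> tuples (p - 1)" for Ks
    using that p by simp
  ultimately have "a * P (M # Ls) Ns = B (br (E M) (nest br E Ls)) (nest br F Ns)"
    using pairing Ls Ns by simp
  also have "\<dots> = (\<Sum>Ks\<in>tuples (p - 1). Q Ls Ks * B (br (E M) (nest br E Ks)) (nest br F Ns))"
    by (subst projector_lower[OF Ls]) (simp add: linear_sum[OF linear_br]
        linear_scale[OF linear_br] linear_sum[OF linear_B_left] linear_scale[OF linear_B_left])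
  also have "\<dots> = (\<Sum>Ks\<in>tuples (p - 1). Q Ls Ks * (a * P (M # Ks) Ns))"
    using Cons Cons_mem pairing Ns by (intro sum.cong) simp_all
  finally show ?thesis .
qed

lemma br_E_nest_F:
  assumes p: "2 \<le> p"
    and pairing: "\<And>Ls Ns. Ls \<in> tuples p \<Longrightarrow> Ns \<in> tuples p \<Longrightarrow>
      B (nest br E Ls) (nest br F Ns) = a * P Ls Ns"
    and pairing_lower: "\<And>Ls Ks. Ls \<in> tuples (p - 1) \<Longrightarrow> Ks \<in> tuples (p - 1) \<Longrightarrow>
      B (nest br E Ls) (nest br F Ks) = b * Q Ls Ks"
    and projector_lower: "\<And>Ls. Ls \<in> tuples (p - 1) \<Longrightarrow>
      nest br E Ls = (\<Sum>Ks\<in>tuples (p - 1). Q Ls Ks *\<^sub>R nest br E Ks)"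
    and Ns: "Ns \<in> tuples p"
  shows "br (E M) (nest br F Ns) =
    ((-1) ^ p * a / b) *\<^sub>R (\<Sum>Ks\<in>tuples (p - 1). P (M # Ks) Ns *\<^sub>R nest br F Ks)"
proof -
  have nonempty: "Ks \<noteq> []" if "Ks \<in> tuples (p - 1)" for Ks using that p by auto
  have lower_grade: "nest br F Ks \<in> G (int (p - 1))" if "Ks \<in> tuples (p - 1)" for Ks
    using nest_F_grade[OF nonempty[OF that]] that by simp
  show ?thesis
  proof (cases "b = 0")
    case True
    \<comment> \<open>here the right-hand side is 0 because \<open>x / 0 = 0\<close>, and so is every F^K of length \<open>p - 1\<close>\<close>
    obtain N Ks where Ns_eq: "Ns = N # Ks" and Ks: "Ks \<in> tuples (p - 1)"
      using Ns p by (cases Ns) auto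
    have "nest br F Ks = 0"
      using nonempty[OF Ks] pairing_lower[OF _ Ks] Ks True by (intro nest_F_eq_0_if_pairings_vanish) auto
    then have "nest br F Ns = 0"
      using nest_Cons[OF nonempty[OF Ks], of br F N] linear_0[OF linear_br] Ns_eq by simp
    then show ?thesis using True by (simp add: linear_0[OF linear_br])
  next
    case False
    let ?R = "\<Sum>Ks\<in>tuples (p - 1). P (M # Ks) Ns *\<^sub>R nest br F Ks"
    show ?thesis
    proof (rule eq_if_B_nest_E_eq)
      show "p - 1 \<noteq> 0" using p by simp
      have "Ns \<noteq> []" using Ns p by auto
      then have "br (E M) (nest br F Ns) \<in> G (-1 + int (length Ns))"
        by (rule br_grade[OF E_grade nest_F_grade])
      then show "br (E M) (nest br F Ns) \<in> G (int (p - 1))" using Ns p by (simp add: of_nat_diff)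
      show "((-1) ^ p * a / b) *\<^sub>R ?R \<in> G (int (p - 1))"
        using lower_grade subspace_grade by (intro subspace_scale subspace_sum) auto
    next
      fix Ls :: "'m list" assume Ls: "Ls \<in> tuples (p - 1)"
      have MLs: "M # Ls \<in> tuples p" using Ls p by simp
      have "Suc (length Ls) = p" using Ls p by simp
      then have "B (nest br E Ls) (br (E M) (nest br F Ns)) = (-1) ^ p * (a * P (M # Ls) Ns)"
        by (simp only: B_nest_E_br_E[OF nonempty[OF Ls]] pairing[OF MLs Ns])
      also have "\<dots> = (-1) ^ p * (\<Sum>Ks\<in>tuples (p - 1). Q Ls Ks * (a * P (M # Ks) Ns))"
        by (simp only: pairing_Cons_absorbs_projector[OF p pairing projector_lower Ls Ns])
      also have "\<dots> = (-1) ^ p * a / b * (\<Sum>Ks\<in>tuples (p - 1). P (M # Ks) Ns * (b * Q Ls Ks))"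
        unfolding sum_distrib_left using False by (intro sum.cong) (auto simp: field_simps)
      also have "\<dots> = B (nest br E Ls) (((-1) ^ p * a / b) *\<^sub>R ?R)"
        using pairing_lower[OF Ls]
        by (simp add: linear_sum[OF linear_B] linear_scale[OF linear_B])
      finally show "B (nest br E Ls) (br (E M) (nest br F Ns)) =
          B (nest br E Ls) (((-1) ^ p * a / b) *\<^sub>R ?R)" .
    qed
  qed
qed

lemma br_nest_E_nest_F_shorter:
  assumes p: "2 \<le> p"
    and pairing: "\<And>Ls Ns. Ls \<in> tuples p \<Longrightarrow> Ns \<in> tuples p \<Longrightarrow>
      B (nest br E Ls) (nest br F Ns) = a * P Ls Ns"
    and Ms: "Ms \<in> tuples (p - 1)" and Ns: "Ns \<in> tuples p"
  shows "br (nest br E Ms) (nest br F Ns) = a *\<^sub>R (\<Sum>M\<in>UNIV. P (M # Ms) Ns *\<^sub>R F M)"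
proof -
  let ?L = "br (nest br E Ms) (nest br F Ns)"
  let ?R = "a *\<^sub>R (\<Sum>M\<in>UNIV. P (M # Ms) Ns *\<^sub>R F M)"
  have Ms_ne: "Ms \<noteq> []" and Ns_ne: "Ns \<noteq> []" using Ms Ns p by auto
  have "?L \<in> G (- int (length Ms) + int (length Ns))"
    by (rule br_grade[OF nest_E_grade[OF Ms_ne] nest_F_grade[OF Ns_ne]])
  then have "?L \<in> G 1" using Ms Ns p by (simp add: of_nat_diff)
  moreover have "?R \<in> G 1"
    unfolding span_F[symmetric] by (intro span_scale span_sum) (auto intro: span_base)
  moreover have "B (E L) ?L = B (E L) ?R" for L
  proof -
    have "B (E L) ?L = a * P (L # Ms) Ns"
      using pairing[of "L # Ms" Ns] Ms Ns p by (simp add: B_invariant[symmetric] nest_Cons[OF Ms_ne])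
    also have "\<dots> = B (E L) ?R"
      by (simp add: linear_sum[OF linear_B] linear_scale[OF linear_B] B_E_F
          if_distrib[of "\<lambda>t. _ * t"] cong: if_cong)
    finally show ?thesis .
  qed
  ultimately show ?thesis using F_expansion[of ?L] F_expansion[of ?R] by simp
qed

lemma B_grade0_br_nest_E_nest_F:
  assumes u: "u \<in> G 0" and Ms: "Ms \<noteq> []" and Ns: "Ns \<noteq> []"
  shows "B u (br (nest br E Ms) (nest br F Ns)) = - (\<Sum>j<length Ns. \<Sum>K\<in>UNIV.
    B (E K) (br u (F (Ns ! j))) * B (nest br E Ms) (nest br F (Ns[j := K])))"
proof -
  have "u \<in> V False" using grade_parity[OF u] by simp
  then have "B u (br (nest br E Ms) (nest br F Ns)) = - B (nest br E Ms) (br u (nest br F Ns))"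
    by (rule B_even_br[OF _ grade_parity[OF nest_E_grade[OF Ms]] grade_parity[OF nest_F_grade[OF Ns]]])
  then show ?thesis
    by (simp add: grade0_br_nest_F[OF u Ns] linear_sum[OF linear_B] linear_scale[OF linear_B])
qed

lemma br_nest_E_nest_F:
  assumes p: "p \<noteq> 0"
    and pairing: "\<And>Ls Ns. Ls \<in> tuples p \<Longrightarrow> Ns \<in> tuples p \<Longrightarrow>
      B (nest br E Ls) (nest br F Ns) = a * P Ls Ns"
    and Ms: "Ms \<in> tuples p" and Ns: "Ns \<in> tuples p"
  shows "br (nest br E Ms) (nest br F Ns) =
    a *\<^sub>R (\<Sum>Ks\<in>tuples p. P Ms Ks *\<^sub>R
      (\<Sum>i<p. if (\<forall>j<p. j \<noteq> i \<longrightarrow> Ks ! j = Ns ! j) then br (E (Ks ! i)) (F (Ns ! i)) else 0))"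
    (is "?L = a *\<^sub>R (\<Sum>Ks\<in>tuples p. P Ms Ks *\<^sub>R (\<Sum>i<p. if ?agree Ks i then _ else 0))")
proof (rule eq_if_B_grade_eq)
  have Ms_ne: "Ms \<noteq> []" and Ns_ne: "Ns \<noteq> []" using Ms Ns p by auto
  have "?L \<in> G (- int (length Ms) + int (length Ns))"
    by (rule br_grade[OF nest_E_grade[OF Ms_ne] nest_F_grade[OF Ns_ne]])
  then show "?L \<in> G 0" using Ms Ns by simp
  have "br (E K) (F N) \<in> G 0" for K N using br_grade[OF E_grade F_grade] by simp
  then show "a *\<^sub>R (\<Sum>Ks\<in>tuples p. P Ms Ks *\<^sub>R
      (\<Sum>i<p. if ?agree Ks i then br (E (Ks ! i)) (F (Ns ! i)) else 0)) \<in> G 0"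
    using subspace_grade by (intro subspace_scale subspace_sum) (auto simp: subspace_0)
next
  fix u assume "u \<in> G (- 0)"
  then have u: "u \<in> G 0" by simp
  then have u_even: "u \<in> V False" using grade_parity[OF u] by simp
  define c where "c j K = B (E K) (br u (F (Ns ! j)))" for j K
  have "Ms \<noteq> []" and "Ns \<noteq> []" using Ms Ns p by auto
  then have left: "B u ?L = - (\<Sum>j<p. \<Sum>K\<in>UNIV. c j K * (a * P Ms (Ns[j := K])))"
    using Ns pairing[OF Ms] by (simp add: B_grade0_br_nest_E_nest_F[OF u] c_def)
  have "B u (a *\<^sub>R (\<Sum>Ks\<in>tuples p. P Ms Ks *\<^sub>R
        (\<Sum>i<p. if ?agree Ks i then br (E (Ks ! i)) (F (Ns ! i)) else 0)))
      = a * (\<Sum>Ks\<in>tuples p. \<Sum>i<p. P Ms Ks * (if ?agree Ks i then - c i (Ks ! i) else 0))"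
    using B_even_br[OF u_even E_odd F_odd]
    by (simp add: linear_sum[OF linear_B] linear_scale[OF linear_B] linear_0[OF linear_B]
        if_distrib[of "B u"] sum_distrib_left c_def cong: if_cong)
  also have "\<dots> = - a * (\<Sum>i<p. \<Sum>Ks\<in>tuples p. if ?agree Ks i then P Ms Ks * c i (Ks ! i) else 0)"
  proof -
    have "P Ms Ks * (if A then - x else 0) = - (if A then P Ms Ks * x else 0)" for A x Ks
      by simp
    then show ?thesis by (subst sum.swap) (simp add: sum_negf)
  qed
  also have "\<dots> = - a * (\<Sum>i<p. \<Sum>K\<in>UNIV. P Ms (Ns[i := K]) * c i K)"
    using Ns by (simp add: sum_tuples_agreeing_off[OF Ns])
  finally show "B u ?L = B u (a *\<^sub>R (\<Sum>Ks\<in>tuples p. P Ms Ks *\<^sub>R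
        (\<Sum>i<p. if ?agree Ks i then br (E (Ks ! i)) (F (Ns ! i)) else 0)))"
    by (simp add: left sum_distrib_left sum_negf mult_ac)
qed

lemma lower_level_projector:
  assumes p: "2 \<le> p"
    and projectors: "\<forall>k\<in>{2..p}. is_projector br E F (P k) k"
    and pairings: "\<forall>k\<in>{2..p}. \<forall>Ms\<in>tuples k. \<forall>Ns\<in>tuples k.
      B (nest br E Ms) (nest br F Ns) = a k * P k Ms Ns"
    and a_1: "a 1 = 1"
  obtains Q where
    "\<And>Ls Ks. Ls \<in> tuples (p - 1) \<Longrightarrow> Ks \<in> tuples (p - 1) \<Longrightarrow>
      B (nest br E Ls) (nest br F Ks) = a (p - 1) * Q Ls Ks"
    "\<And>Ls. Ls \<in> tuples (p - 1) \<Longrightarrow>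
      nest br E Ls = (\<Sum>Ks\<in>tuples (p - 1). Q Ls Ks *\<^sub>R nest br E Ks)"
proof (cases "p = 2")
  case True
  \<comment> \<open>at level 1 the projector is the identity and \<open>a 1 = 1\<close>\<close>
  show thesis
  proof (rule that[of "\<lambda>Ls Ks. if Ls = Ks then 1 else 0"])
    show "B (nest br E Ls) (nest br F Ks) = a (p - 1) * (if Ls = Ks then 1 else 0)"
      if "Ls \<in> tuples (p - 1)" "Ks \<in> tuples (p - 1)" for Ls Ks
      using pairing_tuples_1 that True a_1 by simp
    show "nest br E Ls = (\<Sum>Ks\<in>tuples (p - 1). (if Ls = Ks then 1 else 0) *\<^sub>R nest br E Ks)"
      if "Ls \<in> tuples (p - 1)" for Ls
      by (rule sum_tuples_delta[OF that, symmetric])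
  qed
next
  case False
  then have "p - 1 \<in> {2..p}" using p by auto
  then show thesis
    using that[of "P (p - 1)"] projectors pairings unfolding is_projector_def by blast
qed

end

theorem theorem1:
  fixes n :: nat and V :: "bool \<Rightarrow> 'a::real_vector set" and br :: "'a \<Rightarrow> 'a \<Rightarrow> 'a"
    and e f h :: "nat \<Rightarrow> 'a" and B :: "'a \<Rightarrow> 'a \<Rightarrow> real"
    and E F :: "'m::finite \<Rightarrow> 'a" and P :: "nat \<Rightarrow> 'm list \<Rightarrow> 'm list \<Rightarrow> real"
    and a :: "nat \<Rightarrow> real" and p :: nat
  assumes "4 \<le> n" and "n \<le> 8"
    and "is_U n V br e f h"
    and "inv_form n V br e f h B"
    and "dual_bases n br e f h B E F"
    and "\<forall>k\<in>{2..p}. is_projector br E F (P k) k"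
    and "2 \<le> p"
    and "\<forall>k\<in>{2..p}. \<forall>Ms\<in>tuples k. \<forall>Ns\<in>tuples k.
           B (nest br E Ms) (nest br F Ns) = a k * P k Ms Ns"
    and "a 1 = 1"
  shows
    "(\<forall>M. \<forall>Ns\<in>tuples p.
        br (E M) (nest br F Ns) =
          ((-1) ^ p * a p / a (p - 1)) *\<^sub>R
            (\<Sum>Ks\<in>tuples (p - 1). P p (M # Ks) Ns *\<^sub>R nest br F Ks)) \<and>
     (\<forall>Ms\<in>tuples (p - 1). \<forall>Ns\<in>tuples p.
        br (nest br E Ms) (nest br F Ns) =
          a p *\<^sub>R (\<Sum>M\<in>UNIV. P p (M # Ms) Ns *\<^sub>R F M)) \<and>
     (\<forall>Ms\<in>tuples p. \<forall>Ns\<in>tuples p.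
        br (nest br E Ms) (nest br F Ns) =
          a p *\<^sub>R (\<Sum>Ks\<in>tuples p. P p Ms Ks *\<^sub>R
             (\<Sum>i<p. if (\<forall>j<p. j \<noteq> i \<longrightarrow> Ks ! j = Ns ! j)
                      then br (E (Ks ! i)) (F (Ns ! i)) else 0)))"
proof -
  interpret U_with_form n V br e f h B E F
    by (rule U_with_form.intro) (fact assms)+
  have p: "2 \<le> p" by (fact assms(7))
  have pairing: "\<And>Ls Ns. Ls \<in> tuples p \<Longrightarrow> Ns \<in> tuples p \<Longrightarrow>
      B (nest br E Ls) (nest br F Ns) = a p * P p Ls Ns"
    using assms(8) p by auto
  obtain Q where
    pairing_lower: "\<And>Ls Ks. Ls \<in> tuples (p - 1) \<Longrightarrow> Ks \<in> tuples (p - 1) \<Longrightarrow>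
      B (nest br E Ls) (nest br F Ks) = a (p - 1) * Q Ls Ks" and
    projector_lower: "\<And>Ls. Ls \<in> tuples (p - 1) \<Longrightarrow>
      nest br E Ls = (\<Sum>Ks\<in>tuples (p - 1). Q Ls Ks *\<^sub>R nest br E Ks)"
    using lower_level_projector[OF p assms(6,8,9)] by blast
  show ?thesis
    using br_E_nest_F[OF p pairing pairing_lower projector_lower]
      br_nest_E_nest_F_shorter[OF p pairing] br_nest_E_nest_F[OF _ pairing] p
    by simp
qed

end
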